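(* Let $X$ be a finite $T_0$ topological space, $\mathcal V$ a multivector field on $X$, and $\gamma$ an essential solution in $X$. Then there exist an essential solution $\rho$ in $\alpha(\gamma)$ with $\operatorname{im}\rho=\alpha(\gamma)$ and an essential solution $\rho'$ in $\omega(\gamma)$ with $\operatorname{im}\rho'=\omega(\gamma)$.
   Context: Notation: $\operatorname{cl}$ is closure; $A\subset X$ is locally closed if $\operatorname{cl}A\setminus A$ is closed. A multivector field $\mathcal V$ on $X$ is a partition of $X$ into locally closed sets (multivectors); $[x]_{\mathcal V}$ is the multivector containing $x$. A multivector $V$ is critical if $H(\operatorname{cl}V,\operatorname{cl}V\setminus V)$ (relative singular homology) is nontrivial, regular otherwise. $A$ is $\mathcal V$-compatible if it is a union of multivectors; $\langle A\rangle_{\mathcal V}$ is the smallest locally closed $\mathcal V$-compatible set containing $A$. $\Pi_{\mathcal V}(x)=\operatorname{cl}\{x\}\cup[x]_{\mathcal V}$. A solution is a partial map $\gamma:\mathbb Z\nrightarrow X$ with domain an integer interval and $\gamma(t+1)\in\Pi_{\mathcal V}(\gamma(t))$; a full solution has domain $\mathbb Z$. $\alpha(\gamma)=\langle\bigcap_{t\le0}\gamma((-\infty,t])\rangle_{\mathcal V}$, $\omega(\gamma)=\langle\bigcap_{t\ge0}\gamma([t,\infty))\rangle_{\mathcal V}$. A full solution is essential unless $\alpha(\gamma)$ or $\omega(\gamma)$ is contained in a single regular multivector; an essential solution in $A$ is an essential full solution with image in $A$. *)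

theory Defs
  imports "HOL-Analysis.Analysis" "HOL-Homology.Homology"
begin

definition loc_closed_in :: "'a topology \<Rightarrow> 'a set \<Rightarrow> bool" where
  "loc_closed_in X A \<longleftrightarrow> A \<subseteq> topspace X \<and> closedin X (X closure_of A - A)"

definition multivector_field :: "'a topology \<Rightarrow> 'a set set \<Rightarrow> bool" where
  "multivector_field X V \<longleftrightarrow>
     (\<Union>V = topspace X) \<and> (\<forall>W\<in>V. W \<noteq> {} \<and> loc_closed_in X W) \<and>
     (\<forall>W1\<in>V. \<forall>W2\<in>V. W1 \<noteq> W2 \<longrightarrow> W1 \<inter> W2 = {})"

definition mv_of :: "'a set set \<Rightarrow> 'a \<Rightarrow> 'a set" where
  "mv_of V x = (THE W. W \<in> V \<and> x \<in> W)"

definition critical_mv :: "'a topology \<Rightarrow> 'a set \<Rightarrow> bool" where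
  "critical_mv X W \<longleftrightarrow>
     (\<exists>p. \<not> trivial_group
            (relative_homology_group p (subtopology X (X closure_of W)) (X closure_of W - W)))"

definition regular_mv :: "'a topology \<Rightarrow> 'a set \<Rightarrow> bool" where
  "regular_mv X W \<longleftrightarrow> \<not> critical_mv X W"

definition compatible :: "'a set set \<Rightarrow> 'a set \<Rightarrow> bool" where
  "compatible V A \<longleftrightarrow> (\<forall>x\<in>A. mv_of V x \<subseteq> A)"

definition lc_hull :: "'a topology \<Rightarrow> 'a set set \<Rightarrow> 'a set \<Rightarrow> 'a set" where
  "lc_hull X V A = (THE B. A \<subseteq> B \<and> loc_closed_in X B \<and> compatible V B \<and>
       (\<forall>C. A \<subseteq> C \<and> loc_closed_in X C \<and> compatible V C \<longrightarrow> B \<subseteq> C))"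

definition Pi_mv :: "'a topology \<Rightarrow> 'a set set \<Rightarrow> 'a \<Rightarrow> 'a set" where
  "Pi_mv X V x = X closure_of {x} \<union> mv_of V x"

definition full_solution_in :: "'a topology \<Rightarrow> 'a set set \<Rightarrow> 'a set \<Rightarrow> (int \<Rightarrow> 'a) \<Rightarrow> bool" where
  "full_solution_in X V A \<gamma> \<longleftrightarrow> (\<forall>t. \<gamma> t \<in> A \<and> \<gamma> (t + 1) \<in> Pi_mv X V (\<gamma> t))"

definition alpha_limit :: "'a topology \<Rightarrow> 'a set set \<Rightarrow> (int \<Rightarrow> 'a) \<Rightarrow> 'a set" where
  "alpha_limit X V \<gamma> = lc_hull X V (\<Inter>t\<in>{..0}. \<gamma> ` {..t})"

definition omega_limit :: "'a topology \<Rightarrow> 'a set set \<Rightarrow> (int \<Rightarrow> 'a) \<Rightarrow> 'a set" where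
  "omega_limit X V \<gamma> = lc_hull X V (\<Inter>t\<in>{0..}. \<gamma> ` {t..})"

definition essential :: "'a topology \<Rightarrow> 'a set set \<Rightarrow> (int \<Rightarrow> 'a) \<Rightarrow> bool" where
  "essential X V \<gamma> \<longleftrightarrow>
     \<not> (\<exists>W\<in>V. regular_mv X W \<and> alpha_limit X V \<gamma> \<subseteq> W) \<and>
     \<not> (\<exists>W\<in>V. regular_mv X W \<and> omega_limit X V \<gamma> \<subseteq> W)"

definition essential_solution_in :: "'a topology \<Rightarrow> 'a set set \<Rightarrow> 'a set \<Rightarrow> (int \<Rightarrow> 'a) \<Rightarrow> bool" where
  "essential_solution_in X V A \<gamma> \<longleftrightarrow> full_solution_in X V A \<gamma> \<and> essential X V \<gamma>"

end

theory Submission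
  imports Defs
begin

(* Let A be the set of points that \<gamma> visits arbitrarily far in the past (or future). Since X is
   finite, \<gamma> eventually stays in A, so A is strongly connected for the transition relation
   y \<in> \<Pi>(x). Strong connectivity passes to the hull H = <A>: the points of H reachable from a fixed
   a \<in> A, and the points of H from which a is reachable, both form locally closed V-compatible
   sets containing A, hence contain H by minimality. Repeating a closed walk through all of H gives
   a periodic full solution whose past and future both sweep out H, so its \<alpha>- and \<omega>-limit sets
   are H, and it is essential because \<gamma> is. *)

section \<open>Locally closed sets in finite spaces\<close>

lemma loc_closed_in_iff_openin_Int_closedin:
  "loc_closed_in X S \<longleftrightarrow> (\<exists>U C. openin X U \<and> closedin X C \<and> S = U \<inter> C)"
proof
  assume "loc_closed_in X S"
  then have S: "S \<subseteq> topspace X" and "closedin X (X closure_of S - S)"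
    by (auto simp: loc_closed_in_def)
  then have "openin X (topspace X - (X closure_of S - S))"
    by (simp add: openin_diff)
  moreover have "S = (topspace X - (X closure_of S - S)) \<inter> X closure_of S"
    using closure_of_subset[OF S] S by blast
  ultimately show "\<exists>U C. openin X U \<and> closedin X C \<and> S = U \<inter> C"
    using closedin_closure_of by blast
next
  assume "\<exists>U C. openin X U \<and> closedin X C \<and> S = U \<inter> C"
  then obtain U C where U: "openin X U" and C: "closedin X C" and S: "S = U \<inter> C"
    by blast
  have "X closure_of S \<subseteq> C"
    using S C by (simp add: closure_of_minimal)
  then have "X closure_of S - S = X closure_of S \<inter> (topspace X - U)"
    using S closure_of_subset_topspace[of X S] by blast
  moreover have "closedin X (X closure_of S \<inter> (topspace X - U))"
    using U by (simp add: closedin_Int closedin_diff)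
  moreover have "S \<subseteq> topspace X"
    using S openin_subset[OF U] by blast
  ultimately show "loc_closed_in X S"
    by (simp add: loc_closed_in_def)
qed

lemma loc_closed_in_Int:
  assumes "loc_closed_in X S" and "loc_closed_in X T"
  shows "loc_closed_in X (S \<inter> T)"
proof -
  obtain U C U' C' where "openin X U" "closedin X C" "S = U \<inter> C"
    and "openin X U'" "closedin X C'" "T = U' \<inter> C'"
    using assms unfolding loc_closed_in_iff_openin_Int_closedin by blast
  then have "openin X (U \<inter> U') \<and> closedin X (C \<inter> C') \<and> S \<inter> T = (U \<inter> U') \<inter> (C \<inter> C')"
    by blast
  then show ?thesis
    unfolding loc_closed_in_iff_openin_Int_closedin by blast
qed

lemma loc_closed_in_Inter:
  "finite F \<Longrightarrow> F \<noteq> {} \<Longrightarrow> (\<And>S. S \<in> F \<Longrightarrow> loc_closed_in X S) \<Longrightarrow> loc_closed_in X (\<Inter>F)"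
  by (induction F rule: finite_ne_induct) (auto intro: loc_closed_in_Int)

lemma openin_imp_loc_closed_in: "openin X U \<Longrightarrow> loc_closed_in X U"
  using openin_subset unfolding loc_closed_in_iff_openin_Int_closedin by blast

lemma closedin_imp_loc_closed_in: "closedin X C \<Longrightarrow> loc_closed_in X C"
  using closedin_subset unfolding loc_closed_in_iff_openin_Int_closedin by blast

lemma in_closure_of_singleton: "x \<in> topspace X \<Longrightarrow> x \<in> X closure_of {x}"
  using closure_of_subset[of "{x}" X] by simp

lemma closure_of_singleton_subset:
  "y \<in> X closure_of {x} \<Longrightarrow> X closure_of {y} \<subseteq> X closure_of {x}"
  by (simp add: closure_of_minimal)

(* In a finite space the closed sets are exactly the sets that are down-closed for the
   specialization order y \<le> x \<longleftrightarrow> y \<in> cl {x}. *)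
lemma closedin_finite_space_if_down_closed:
  assumes "finite (topspace X)" and "S \<subseteq> topspace X"
    and "\<And>x. x \<in> S \<Longrightarrow> X closure_of {x} \<subseteq> S"
  shows "closedin X S"
proof -
  have S_eq: "S = (\<Union>x\<in>S. X closure_of {x})"
  proof
    show "S \<subseteq> (\<Union>x\<in>S. X closure_of {x})"
      using assms(2) in_closure_of_singleton[of _ X] by blast
  qed (use assms(3) in blast)
  have "finite S"
    using assms(1,2) finite_subset by blast
  then have "closedin X (\<Union>x\<in>S. X closure_of {x})"
    by (intro closedin_Union) auto
  then show ?thesis
    by (simp only: S_eq[symmetric])
qed

lemma loc_closed_in_downward_closed_subset:
  assumes "finite (topspace X)" and H: "loc_closed_in X H" and "R \<subseteq> H"
    and down: "\<And>r z. r \<in> R \<Longrightarrow> z \<in> H \<Longrightarrow> z \<in> X closure_of {r} \<Longrightarrow> z \<in> R"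
  shows "loc_closed_in X R"
proof -
  define D where "D = (\<Union>r\<in>R. X closure_of {r})"
  have "closedin X D"
  proof (rule closedin_finite_space_if_down_closed[OF assms(1)])
    show "D \<subseteq> topspace X"
      by (auto simp: D_def dest: closure_of_subset_topspace[THEN subsetD])
    show "X closure_of {x} \<subseteq> D" if "x \<in> D" for x
      using that closure_of_singleton_subset by (fastforce simp: D_def)
  qed
  moreover have "R = H \<inter> D"
  proof
    have "r \<in> X closure_of {r}" if "r \<in> R" for r
      using that \<open>R \<subseteq> H\<close> H by (auto simp: loc_closed_in_def intro: in_closure_of_singleton)
    then show "R \<subseteq> H \<inter> D"
      using \<open>R \<subseteq> H\<close> by (auto simp: D_def)
    show "H \<inter> D \<subseteq> R"
      using down by (auto simp: D_def)
  qed
  ultimately show ?thesis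
    using H closedin_imp_loc_closed_in loc_closed_in_Int by metis
qed

lemma loc_closed_in_upward_closed_subset:
  assumes "finite (topspace X)" and H: "loc_closed_in X H" and "Q \<subseteq> H"
    and up: "\<And>q z. q \<in> Q \<Longrightarrow> z \<in> H \<Longrightarrow> q \<in> X closure_of {z} \<Longrightarrow> z \<in> Q"
  shows "loc_closed_in X Q"
proof -
  define K where "K = {z \<in> topspace X. X closure_of {z} \<inter> Q = {}}"
  have "closedin X K"
  proof (rule closedin_finite_space_if_down_closed[OF assms(1)])
    show "K \<subseteq> topspace X"
      by (auto simp: K_def)
    show "X closure_of {x} \<subseteq> K" if "x \<in> K" for x
      using that closure_of_singleton_subset closure_of_subset_topspace by (fastforce simp: K_def)
  qed
  moreover have "Q = H \<inter> (topspace X - K)"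
  proof
    have "q \<in> X closure_of {q}" if "q \<in> Q" for q
      using that \<open>Q \<subseteq> H\<close> H by (auto simp: loc_closed_in_def intro: in_closure_of_singleton)
    then show "Q \<subseteq> H \<inter> (topspace X - K)"
      using \<open>Q \<subseteq> H\<close> H by (auto simp: K_def loc_closed_in_def)
    show "H \<inter> (topspace X - K) \<subseteq> Q"
      using up by (auto simp: K_def)
  qed
  ultimately show ?thesis
    using H openin_diff openin_imp_loc_closed_in loc_closed_in_Int by (metis openin_topspace)
qed

section \<open>Multivector fields and the locally closed compatible hull\<close>

lemma
  assumes "multivector_field X V" and "x \<in> topspace X"
  shows mv_of_in: "mv_of V x \<in> V" and in_mv_of: "x \<in> mv_of V x"
proof -
  obtain W where W: "W \<in> V" "x \<in> W"
    using assms unfolding multivector_field_def by blast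
  have "mv_of V x = W"
    unfolding mv_of_def
  proof (rule the_equality)
    show "\<And>W'. W' \<in> V \<and> x \<in> W' \<Longrightarrow> W' = W"
      using W assms(1) unfolding multivector_field_def by blast
  qed (use W in simp)
  with W show "mv_of V x \<in> V" "x \<in> mv_of V x"
    by simp_all
qed

lemma mv_of_subset_topspace:
  "multivector_field X V \<Longrightarrow> x \<in> topspace X \<Longrightarrow> mv_of V x \<subseteq> topspace X"
  by (metis Union_upper multivector_field_def mv_of_in)

lemma mv_of_eq:
  assumes V: "multivector_field X V" and x: "x \<in> topspace X" and y: "y \<in> mv_of V x"
  shows "mv_of V y = mv_of V x"
proof (rule ccontr)
  have "y \<in> topspace X"
    using mv_of_subset_topspace[OF V x] y by blast
  then have "y \<in> mv_of V y \<inter> mv_of V x" "mv_of V y \<in> V" "mv_of V x \<in> V"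
    using in_mv_of[OF V] mv_of_in[OF V] x y by simp_all
  moreover have "\<forall>W1\<in>V. \<forall>W2\<in>V. W1 \<noteq> W2 \<longrightarrow> W1 \<inter> W2 = {}"
    using V unfolding multivector_field_def by (elim conjE)
  moreover assume "mv_of V y \<noteq> mv_of V x"
  ultimately show False
    by blast
qed

lemma compatible_topspace: "multivector_field X V \<Longrightarrow> compatible V (topspace X)"
  by (simp add: compatible_def mv_of_subset_topspace)

definition is_lc_hull :: "'a topology \<Rightarrow> 'a set set \<Rightarrow> 'a set \<Rightarrow> 'a set \<Rightarrow> bool" where
  "is_lc_hull X V A H \<longleftrightarrow> A \<subseteq> H \<and> loc_closed_in X H \<and> compatible V H \<and>
     (\<forall>C. A \<subseteq> C \<and> loc_closed_in X C \<and> compatible V C \<longrightarrow> H \<subseteq> C)"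

lemma lc_hull_eqI: "is_lc_hull X V A H \<Longrightarrow> lc_hull X V A = H"
  unfolding lc_hull_def is_lc_hull_def by (rule the_equality) (auto intro: antisym)

lemma lc_hull_eq_self: "loc_closed_in X H \<Longrightarrow> compatible V H \<Longrightarrow> lc_hull X V H = H"
  by (rule lc_hull_eqI) (auto simp: is_lc_hull_def)

lemma is_lc_hull_lc_hull:
  assumes fin: "finite (topspace X)" and V: "multivector_field X V" and "A \<subseteq> topspace X"
  shows "is_lc_hull X V A (lc_hull X V A)"
proof -
  define \<C> where "\<C> = {C. A \<subseteq> C \<and> loc_closed_in X C \<and> compatible V C}"
  have "topspace X \<in> \<C>"
    using assms by (simp add: \<C>_def loc_closed_in_def compatible_topspace)
  moreover have "\<C> \<subseteq> Pow (topspace X)"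
    by (auto simp: \<C>_def loc_closed_in_def)
  with fin have "finite \<C>"
    by (simp add: finite_subset)
  ultimately have "loc_closed_in X (\<Inter>\<C>)"
    by (intro loc_closed_in_Inter) (auto simp: \<C>_def)
  then have "is_lc_hull X V A (\<Inter>\<C>)"
    by (auto simp: is_lc_hull_def \<C>_def compatible_def)
  then show ?thesis
    using lc_hull_eqI by metis
qed

section \<open>Strong connectivity of the hull\<close>

definition Pi_rel :: "'a topology \<Rightarrow> 'a set set \<Rightarrow> 'a rel" where
  "Pi_rel X V = {(x, y). y \<in> Pi_mv X V x}"

lemma full_solution_in_iff_Pi_rel:
  "full_solution_in X V A \<gamma> \<longleftrightarrow> (\<forall>t. \<gamma> t \<in> A \<and> (\<gamma> t, \<gamma> (t + 1)) \<in> Pi_rel X V)"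
  by (simp add: full_solution_in_def Pi_rel_def)

lemma Pi_rel_refl: "x \<in> topspace X \<Longrightarrow> (x, x) \<in> Pi_rel X V"
  by (simp add: Pi_rel_def Pi_mv_def in_closure_of_singleton)

lemma is_lc_hull_reachable_from:
  assumes fin: "finite (topspace X)" and H: "is_lc_hull X V A H"
    and A: "A \<subseteq> {y. (a, y) \<in> (Restr (Pi_rel X V) H)\<^sup>*}"
  shows "H \<subseteq> {y. (a, y) \<in> (Restr (Pi_rel X V) H)\<^sup>*}"
proof -
  let ?E = "Restr (Pi_rel X V) H"
  define R where "R = {y \<in> H. (a, y) \<in> ?E\<^sup>*}"
  have lc: "loc_closed_in X H" and cp: "compatible V H" and "A \<subseteq> H"
    using H by (auto simp: is_lc_hull_def)
  have succ_closed: "z \<in> R" if "r \<in> R" "z \<in> H" "z \<in> Pi_mv X V r" for r z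
  proof -
    have "(r, z) \<in> ?E"
      using that by (auto simp: R_def Pi_rel_def)
    with \<open>r \<in> R\<close> \<open>z \<in> H\<close> show ?thesis
      by (auto simp: R_def intro: rtrancl_into_rtrancl)
  qed
  have "loc_closed_in X R"
  proof (rule loc_closed_in_downward_closed_subset[OF fin lc])
    show "R \<subseteq> H"
      by (auto simp: R_def)
  qed (use succ_closed in \<open>simp add: Pi_mv_def\<close>)
  moreover have "compatible V R"
    unfolding compatible_def
  proof (intro ballI subsetI)
    fix r z
    assume "r \<in> R" and "z \<in> mv_of V r"
    moreover have "z \<in> H"
      using cp calculation by (auto simp: compatible_def R_def)
    ultimately show "z \<in> R"
      by (simp add: succ_closed Pi_mv_def)
  qed
  moreover have "A \<subseteq> R"
    using A \<open>A \<subseteq> H\<close> by (auto simp: R_def)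
  ultimately have "H \<subseteq> R"
    using H by (auto simp: is_lc_hull_def)
  then show ?thesis
    by (auto simp: R_def)
qed

lemma is_lc_hull_reaching:
  assumes fin: "finite (topspace X)" and V: "multivector_field X V" and H: "is_lc_hull X V A H"
    and A: "A \<subseteq> {y. (y, a) \<in> (Restr (Pi_rel X V) H)\<^sup>*}"
  shows "H \<subseteq> {y. (y, a) \<in> (Restr (Pi_rel X V) H)\<^sup>*}"
proof -
  let ?E = "Restr (Pi_rel X V) H"
  define Q where "Q = {y \<in> H. (y, a) \<in> ?E\<^sup>*}"
  have lc: "loc_closed_in X H" and cp: "compatible V H" and "A \<subseteq> H"
    using H by (auto simp: is_lc_hull_def)
  have pred_closed: "z \<in> Q" if "q \<in> Q" "z \<in> H" "q \<in> Pi_mv X V z" for q z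
  proof -
    have "(z, q) \<in> ?E"
      using that by (auto simp: Q_def Pi_rel_def)
    with \<open>q \<in> Q\<close> \<open>z \<in> H\<close> show ?thesis
      by (auto simp: Q_def intro: converse_rtrancl_into_rtrancl)
  qed
  have "loc_closed_in X Q"
  proof (rule loc_closed_in_upward_closed_subset[OF fin lc])
    show "Q \<subseteq> H"
      by (auto simp: Q_def)
  qed (use pred_closed in \<open>simp add: Pi_mv_def\<close>)
  moreover have "compatible V Q"
    unfolding compatible_def
  proof (intro ballI subsetI)
    fix q z
    assume "q \<in> Q" and z: "z \<in> mv_of V q"
    moreover have "q \<in> topspace X"
      using \<open>q \<in> Q\<close> lc by (auto simp: Q_def loc_closed_in_def)
    moreover have "z \<in> H"
      using cp calculation by (auto simp: compatible_def Q_def)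
    ultimately show "z \<in> Q"
      using mv_of_eq[OF V _ z] in_mv_of[OF V] by (simp add: pred_closed Pi_mv_def)
  qed
  moreover have "A \<subseteq> Q"
    using A \<open>A \<subseteq> H\<close> by (auto simp: Q_def)
  ultimately have "H \<subseteq> Q"
    using H by (auto simp: is_lc_hull_def)
  then show ?thesis
    by (auto simp: Q_def)
qed

lemma lc_hull_strongly_connected:
  assumes fin: "finite (topspace X)" and V: "multivector_field X V"
    and "A \<subseteq> topspace X" and "a \<in> A" and conn: "A \<times> A \<subseteq> (Restr (Pi_rel X V) A)\<^sup>*"
  shows "lc_hull X V A \<times> lc_hull X V A \<subseteq> (Restr (Pi_rel X V) (lc_hull X V A))\<^sup>*"
proof -
  define H where "H = lc_hull X V A"
  have H: "is_lc_hull X V A H"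
    unfolding H_def using assms by (intro is_lc_hull_lc_hull)
  then have "(Restr (Pi_rel X V) A)\<^sup>* \<subseteq> (Restr (Pi_rel X V) H)\<^sup>*"
    by (intro rtrancl_mono) (auto simp: is_lc_hull_def)
  with conn have conn_H: "A \<times> A \<subseteq> (Restr (Pi_rel X V) H)\<^sup>*"
    by blast
  have "H \<subseteq> {y. (a, y) \<in> (Restr (Pi_rel X V) H)\<^sup>*}"
    using conn_H \<open>a \<in> A\<close> by (intro is_lc_hull_reachable_from[OF fin H]) blast
  moreover have "H \<subseteq> {y. (y, a) \<in> (Restr (Pi_rel X V) H)\<^sup>*}"
    using conn_H \<open>a \<in> A\<close> by (intro is_lc_hull_reaching[OF fin V H]) blast
  ultimately show ?thesis
    unfolding H_def[symmetric] by (blast intro: rtrancl_trans)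
qed

section \<open>Periodic paths through strongly connected sets\<close>

lemma walk_of_rtrancl:
  assumes "(x, y) \<in> E\<^sup>*" and "E \<subseteq> H \<times> H" and "x \<in> H"
  shows "\<exists>w. w \<noteq> [] \<and> hd w = x \<and> last w = y \<and> successively (\<lambda>u v. (u, v) \<in> E) w \<and> set w \<subseteq> H"
  using assms(1)
proof (induction rule: rtrancl_induct)
  case base
  show ?case
    using assms(3) by (intro exI[of _ "[x]"]) auto
next
  case (step y z)
  then obtain w where "w \<noteq> []" "hd w = x" "last w = y"
    and "successively (\<lambda>u v. (u, v) \<in> E) w" "set w \<subseteq> H"
    by blast
  with step.hyps(2) assms(2) show ?case
    by (intro exI[of _ "w @ [z]"]) (auto simp: successively_append_iff)
qed

lemma closed_walk_covering:
  assumes "finite F" and "F \<subseteq> H" and E: "E \<subseteq> H \<times> H" and a: "a \<in> H"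
    and refl: "refl_on H E" and conn: "H \<times> H \<subseteq> E\<^sup>*"
  shows "\<exists>w. w \<noteq> [] \<and> hd w = a \<and> last w = a \<and> successively (\<lambda>u v. (u, v) \<in> E) w \<and>
             F \<subseteq> set w \<and> set w \<subseteq> H"
  using assms(1,2)
proof (induction rule: finite_induct)
  case empty
  show ?case
    using a by (intro exI[of _ "[a]"]) auto
next
  case (insert x F)
  then obtain w where w: "w \<noteq> []" "hd w = a" "last w = a"
    "successively (\<lambda>u v. (u, v) \<in> E) w" "F \<subseteq> set w" "set w \<subseteq> H"
    by auto
  have x: "x \<in> H"
    using insert.prems by blast
  obtain w1 where w1: "w1 \<noteq> []" "hd w1 = a" "last w1 = x"
    "successively (\<lambda>u v. (u, v) \<in> E) w1" "set w1 \<subseteq> H"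
    using walk_of_rtrancl[OF _ E a] conn a x by blast
  obtain w2 where w2: "w2 \<noteq> []" "hd w2 = x" "last w2 = a"
    "successively (\<lambda>u v. (u, v) \<in> E) w2" "set w2 \<subseteq> H"
    using walk_of_rtrancl[OF _ E x] conn a x by blast
  have "(a, a) \<in> E" "(x, x) \<in> E"
    using refl a x by (auto simp: refl_on_def)
  moreover have "x \<in> set w2"
    using w2(1,2) hd_in_set by blast
  ultimately show ?case
    using w w1 w2 by (intro exI[of _ "w @ w1 @ w2"]) (auto simp: successively_append_iff)
qed

lemma periodic_unrolling:
  fixes w :: "'a list"
  assumes "w \<noteq> []" and cyc: "successively (\<lambda>u v. (u, v) \<in> E) (w @ [hd w])"
  defines "\<rho> \<equiv> \<lambda>t::int. w ! nat (t mod int (length w))"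
  shows "(\<rho> t, \<rho> (t + 1)) \<in> E" and "\<rho> ` {..t} = set w" and "\<rho> ` {t..} = set w"
proof -
  define n where "n = length w"
  have n: "0 < n"
    using assms(1) by (simp add: n_def)
  have \<rho>_mod: "\<rho> s = w ! i" if "s mod int n = int i" for s i
    using that by (simp add: \<rho>_def n_def)
  define i where "i = nat (t mod int n)"
  have ti: "t mod int n = int i"
    using n by (simp add: i_def)
  have "i < n"
    using n by (simp add: i_def nat_less_iff)
  have "(t + 1) mod int n = (int i + 1) mod int n"
    using ti mod_add_left_eq[of t "int n" 1] by simp
  also have "\<dots> = int (Suc i mod n)"
    by (simp add: of_nat_mod add.commute)
  finally have "\<rho> (t + 1) = w ! (Suc i mod n)"
    by (rule \<rho>_mod)
  also have "\<dots> = (w @ [hd w]) ! Suc i"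
  proof (cases "Suc i < n")
    case True
    then show ?thesis
      by (simp add: nth_append n_def)
  next
    case False
    with \<open>i < n\<close> have "Suc i = n"
      by simp
    with assms(1) show ?thesis
      by (simp add: n_def hd_conv_nth)
  qed
  finally have "\<rho> (t + 1) = (w @ [hd w]) ! Suc i" .
  moreover have "\<rho> t = (w @ [hd w]) ! i"
    using \<open>i < n\<close> \<rho>_mod[OF ti] by (simp add: nth_append n_def)
  ultimately show "(\<rho> t, \<rho> (t + 1)) \<in> E"
    using successively_nth[OF cyc, of i] \<open>i < n\<close> by (simp add: n_def)
  have range: "\<rho> ` S \<subseteq> set w" for S
    using n by (auto simp: \<rho>_def n_def nat_less_iff intro!: nth_mem)
  show "\<rho> ` {..t} = set w"
  proof (rule antisym[OF range], rule subsetI)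
    fix x
    assume "x \<in> set w"
    then obtain j where "j < n" "x = w ! j"
      by (auto simp: in_set_conv_nth n_def)
    moreover have "(t - (t - int j) mod int n) mod int n = int j"
      using \<open>j < n\<close> mod_diff_right_eq[of t "t - int j" "int n"] by simp
    moreover have "t - (t - int j) mod int n \<le> t"
      using n by simp
    ultimately show "x \<in> \<rho> ` {..t}"
      using \<rho>_mod by (metis atMost_iff image_eqI)
  qed
  show "\<rho> ` {t..} = set w"
  proof (rule antisym[OF range], rule subsetI)
    fix x
    assume "x \<in> set w"
    then obtain j where "j < n" "x = w ! j"
      by (auto simp: in_set_conv_nth n_def)
    moreover have "(t + (int j - t) mod int n) mod int n = int j"
      using \<open>j < n\<close> mod_add_right_eq[of t "int j - t" "int n"] by simp
    moreover have "t \<le> t + (int j - t) mod int n"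
      using n by simp
    ultimately show "x \<in> \<rho> ` {t..}"
      using \<rho>_mod by (metis atLeast_iff image_eqI)
  qed
qed

lemma strongly_connected_periodic_path:
  assumes "finite H" and "H \<noteq> {}" and "E \<subseteq> H \<times> H" and "refl_on H E" and "H \<times> H \<subseteq> E\<^sup>*"
  shows "\<exists>\<rho>::int \<Rightarrow> 'a. (\<forall>t. (\<rho> t, \<rho> (t + 1)) \<in> E) \<and> (\<forall>t. \<rho> ` {..t} = H) \<and> (\<forall>t. \<rho> ` {t..} = H)"
proof -
  obtain a where "a \<in> H"
    using assms(2) by blast
  then obtain w where w: "w \<noteq> []" "hd w = a" "last w = a"
    "successively (\<lambda>u v. (u, v) \<in> E) w" "set w = H"
    using closed_walk_covering[OF assms(1) order_refl assms(3) _ assms(4,5)] by blast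
  have "(a, a) \<in> E"
    using \<open>a \<in> H\<close> assms(4) by (simp add: refl_on_def)
  with w have "successively (\<lambda>u v. (u, v) \<in> E) (w @ [hd w])"
    by (simp add: successively_append_iff)
  from periodic_unrolling[OF w(1) this] w(5) show ?thesis
    by (intro exI[of _ "\<lambda>t. w ! nat (t mod int (length w))"]) simp
qed

section \<open>Limit sets of solutions\<close>

lemma rtrancl_int_chain:
  fixes f :: "int \<Rightarrow> 'a"
  assumes "s \<le> s'" and "\<And>u. s \<le> u \<Longrightarrow> u < s' \<Longrightarrow> (f u, f (u + 1)) \<in> R"
  shows "(f s, f s') \<in> R\<^sup>*"
  using assms
proof (induction s' rule: int_ge_induct)
  case base
  show ?case
    by simp
next
  case (step i)
  then have "(f s, f i) \<in> R\<^sup>*" and "(f i, f (i + 1)) \<in> R"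
    by simp_all
  then show ?case
    by (rule rtrancl_into_rtrancl)
qed

lemma Inter_past_images_eq_tail:
  fixes \<gamma> :: "int \<Rightarrow> 'a"
  assumes "finite (range \<gamma>)"
  obtains T where "T \<le> 0" and "(\<Inter>t\<in>{..0}. \<gamma> ` {..t}) = \<gamma> ` {..T}"
proof -
  let ?C = "(\<lambda>t. \<gamma> ` {..t}) ` {..0}"
  have "?C \<subseteq> Pow (range \<gamma>)"
    by auto
  then have "finite ?C"
    using assms by (simp add: finite_subset)
  moreover have "?C \<noteq> {}"
    by simp
  moreover have "subset.chain UNIV ?C"
    unfolding subset_chain_def
  proof (intro conjI ballI subset_UNIV)
    fix P Q
    assume "P \<in> ?C" and "Q \<in> ?C"
    then obtain s t where "P = \<gamma> ` {..s}" and "Q = \<gamma> ` {..t}"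
      by blast
    then show "P \<subseteq> Q \<or> Q \<subseteq> P"
      by (metis atMost_subset_iff image_mono linorder_linear)
  qed
  ultimately have "\<Inter>?C \<in> ?C"
    by (rule Inter_in_chain)
  with that show ?thesis
    by auto
qed

lemma past_limit_strongly_connected:
  fixes \<gamma> :: "int \<Rightarrow> 'a"
  assumes "finite (range \<gamma>)" and step: "\<And>t. (\<gamma> t, \<gamma> (t + 1)) \<in> R"
  defines "A \<equiv> \<Inter>t\<in>{..0}. \<gamma> ` {..t}"
  shows "A \<noteq> {}" and "A \<times> A \<subseteq> (Restr R A)\<^sup>*"
proof -
  obtain T where "T \<le> 0" and A_eq: "A = \<gamma> ` {..T}"
    using Inter_past_images_eq_tail[OF assms(1)] unfolding A_def by blast
  then show "A \<noteq> {}"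
    by blast
  show "A \<times> A \<subseteq> (Restr R A)\<^sup>*"
  proof clarify
    fix a b
    assume "a \<in> A" and "b \<in> A"
    then obtain s' where "s' \<le> T" and b: "b = \<gamma> s'"
      using A_eq by blast
    have "a \<in> \<gamma> ` {..s'}"
      using \<open>a \<in> A\<close> \<open>s' \<le> T\<close> \<open>T \<le> 0\<close> by (auto simp: A_def)
    then obtain s where "s \<le> s'" and a: "a = \<gamma> s"
      by blast
    have "(\<gamma> s, \<gamma> s') \<in> (Restr R A)\<^sup>*"
    proof (rule rtrancl_int_chain[OF \<open>s \<le> s'\<close>])
      fix u
      assume "u < s'"
      with \<open>s' \<le> T\<close> have "\<gamma> u \<in> A" and "\<gamma> (u + 1) \<in> A"
        by (auto simp: A_eq)
      with step show "(\<gamma> u, \<gamma> (u + 1)) \<in> Restr R A"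
        by blast
    qed
    with a b show "(a, b) \<in> (Restr R A)\<^sup>*"
      by simp
  qed
qed

lemma future_limit_strongly_connected:
  fixes \<gamma> :: "int \<Rightarrow> 'a"
  assumes "finite (range \<gamma>)" and step: "\<And>t. (\<gamma> t, \<gamma> (t + 1)) \<in> R"
  defines "A \<equiv> \<Inter>t\<in>{0..}. \<gamma> ` {t..}"
  shows "A \<noteq> {}" and "A \<times> A \<subseteq> (Restr R A)\<^sup>*"
proof -
  (* Reversing time turns A into the past limit set of a path of R\<inverse>, and strong connectivity
     does not see the direction of the edges. *)
  define \<delta> where "\<delta> = \<gamma> \<circ> uminus"
  have "range \<delta> = range \<gamma>"
    unfolding \<delta>_def image_comp[symmetric] by simp
  then have "finite (range \<delta>)"
    using assms(1) by simp
  moreover have "(\<delta> t, \<delta> (t + 1)) \<in> R\<inverse>" for t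
    using step[of "- t - 1"] by (simp add: \<delta>_def)
  moreover have "(\<Inter>t\<in>{..0}. \<delta> ` {..t}) = A"
  proof -
    have "A = (\<Inter>t\<in>uminus ` {..0}. \<gamma> ` {t..})"
      by (simp add: A_def)
    also have "\<dots> = (\<Inter>t\<in>{..0}. \<gamma> ` {- t..})"
      by (simp only: INF_image comp_def)
    also have "\<dots> = (\<Inter>t\<in>{..0}. \<delta> ` {..t})"
      unfolding \<delta>_def image_comp[symmetric] by simp
    finally show ?thesis ..
  qed
  ultimately have "A \<noteq> {}" and conn: "A \<times> A \<subseteq> (Restr (R\<inverse>) A)\<^sup>*"
    using past_limit_strongly_connected[of \<delta> "R\<inverse>"] by auto
  then show "A \<noteq> {}"
    by simp
  have "Restr (R\<inverse>) A = (Restr R A)\<inverse>"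
    by auto
  with conn show "A \<times> A \<subseteq> (Restr R A)\<^sup>*"
    by (auto simp: rtrancl_converse)
qed

lemma essential_solution_on_lc_hull:
  assumes fin: "finite (topspace X)" and V: "multivector_field X V"
    and A: "A \<subseteq> topspace X" and "A \<noteq> {}" and conn: "A \<times> A \<subseteq> (Restr (Pi_rel X V) A)\<^sup>*"
    and not_regular: "\<not> (\<exists>W\<in>V. regular_mv X W \<and> lc_hull X V A \<subseteq> W)"
  shows "\<exists>\<rho>. essential_solution_in X V (lc_hull X V A) \<rho> \<and> range \<rho> = lc_hull X V A"
proof -
  define H where "H = lc_hull X V A"
  have "is_lc_hull X V A H"
    unfolding H_def using fin V A by (rule is_lc_hull_lc_hull)
  then have "A \<subseteq> H" and lc: "loc_closed_in X H" and cp: "compatible V H"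
    by (simp_all add: is_lc_hull_def)
  then have "H \<subseteq> topspace X"
    by (simp add: loc_closed_in_def)
  obtain a where "a \<in> A"
    using \<open>A \<noteq> {}\<close> by blast
  have "finite H"
    using fin \<open>H \<subseteq> topspace X\<close> finite_subset by blast
  moreover have "H \<noteq> {}"
    using \<open>a \<in> A\<close> \<open>A \<subseteq> H\<close> by blast
  moreover have "refl_on H (Restr (Pi_rel X V) H)"
    using \<open>H \<subseteq> topspace X\<close> Pi_rel_refl by (fastforce simp: refl_on_def)
  moreover have "H \<times> H \<subseteq> (Restr (Pi_rel X V) H)\<^sup>*"
    unfolding H_def using fin V A \<open>a \<in> A\<close> conn by (rule lc_hull_strongly_connected)
  ultimately obtain \<rho> :: "int \<Rightarrow> 'a" where step: "\<forall>t. (\<rho> t, \<rho> (t + 1)) \<in> Restr (Pi_rel X V) H"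
    and past: "\<forall>t. \<rho> ` {..t} = H" and future: "\<forall>t. \<rho> ` {t..} = H"
    using strongly_connected_periodic_path[of H "Restr (Pi_rel X V) H"] by blast
  have "full_solution_in X V H \<rho>"
    using step by (simp add: full_solution_in_iff_Pi_rel)
  moreover have "range \<rho> = H"
    using step past by blast
  moreover have "alpha_limit X V \<rho> = H" and "omega_limit X V \<rho> = H"
    using past future lc_hull_eq_self[OF lc cp] by (simp_all add: alpha_limit_def omega_limit_def)
  ultimately show ?thesis
    using not_regular by (auto simp: essential_solution_in_def essential_def H_def)
qed

theorem proposition3p10:
  fixes X :: "'a topology" and V :: "'a set set" and \<gamma> :: "int \<Rightarrow> 'a"
  assumes "finite (topspace X)" and "t0_space X"
    and "multivector_field X V"
    and "essential_solution_in X V (topspace X) \<gamma>"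
  shows "(\<exists>\<rho>. essential_solution_in X V (alpha_limit X V \<gamma>) \<rho> \<and> range \<rho> = alpha_limit X V \<gamma>) \<and>
         (\<exists>\<rho>'. essential_solution_in X V (omega_limit X V \<gamma>) \<rho>' \<and> range \<rho>' = omega_limit X V \<gamma>)"
proof -
  have "full_solution_in X V (topspace X) \<gamma>" and ess: "essential X V \<gamma>"
    using assms(4) by (simp_all add: essential_solution_in_def)
  then have step: "\<And>t. (\<gamma> t, \<gamma> (t + 1)) \<in> Pi_rel X V" and "range \<gamma> \<subseteq> topspace X"
    by (auto simp: full_solution_in_iff_Pi_rel)
  have fin: "finite (range \<gamma>)"
    using \<open>range \<gamma> \<subseteq> topspace X\<close> assms(1) by (rule finite_subset)
  have limit: "\<exists>\<rho>. essential_solution_in X V (lc_hull X V A) \<rho> \<and> range \<rho> = lc_hull X V A"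
    if "A \<subseteq> range \<gamma>" "A \<noteq> {}" "A \<times> A \<subseteq> (Restr (Pi_rel X V) A)\<^sup>*"
      "\<not> (\<exists>W\<in>V. regular_mv X W \<and> lc_hull X V A \<subseteq> W)" for A
    using that \<open>range \<gamma> \<subseteq> topspace X\<close> by (intro essential_solution_on_lc_hull[OF assms(1,3)]) auto
  have "\<exists>\<rho>. essential_solution_in X V (alpha_limit X V \<gamma>) \<rho> \<and> range \<rho> = alpha_limit X V \<gamma>"
    unfolding alpha_limit_def
    by (rule limit) (use past_limit_strongly_connected[OF fin step] ess in \<open>auto simp: essential_def alpha_limit_def\<close>)
  moreover have "\<exists>\<rho>. essential_solution_in X V (omega_limit X V \<gamma>) \<rho> \<and> range \<rho> = omega_limit X V \<gamma>"
    unfolding omega_limit_def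
    by (rule limit) (use future_limit_strongly_connected[OF fin step] ess in \<open>auto simp: essential_def omega_limit_def\<close>)
  ultimately show ?thesis
    by blast
qed

end
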